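(* Let $\mu_0,\mu_1,\mu_2>0$, $k\ge4$ and $\boldsymbol{s}\in\mathbb{R}^n$. The canonical spline EMD cost function $\boldsymbol{c}_1[\boldsymbol{s}](\boldsymbol{a},\boldsymbol{\phi})=\big\|\mathbb{B}_k(\boldsymbol{s})-\mathbb{B}_k(\boldsymbol{a})\cdot\cos(\mathbb{B}_k(\boldsymbol{\phi}))\big\|_2^2$, defined on $\boldsymbol{\mathcal{S}}_{\mu_0,\mu_1,\mu_2}$, is not a convex function of $(\boldsymbol{a},\boldsymbol{\phi})$.
   Context: Spline setting: $k,\ell\in\mathbb{N}$, $k\le\ell-1$, knots $\tau_0<\dots<\tau_{\ell-1}$, $n=k+\ell-2$, extended knot vector $\delta_i=\tau_0$ ($0\le i\le k-1$), $\delta_i=\tau_{i-k+1}$ ($k\le i\le n-1$), $\delta_i=\tau_{\ell-1}$ ($n\le i\le n+k-1$); $B_{i,k}$ ($0\le i\le n-1$) are the B-splines of order $k$ on this extended knot vector (de Boor–Cox recursion, vanishing-denominator terms set to $0$), and $\mathbb{B}_k(\boldsymbol{x})=\sum_{i=0}^{n-1}x_iB_{i,k}$ for $\boldsymbol{x}\in\mathbb{R}^n$. $\|f\|_2^2=\int_{\tau_0}^{\tau_{\ell-1}}f(t)^2\,dt$. For $f,g$ on $[\tau_0,\tau_{\ell-1}]$, $f\preceq g$ means pointwise $\le$; $|f|$ is the pointwise absolute value. For $\mu_0,\mu_1,\mu_2>0$ and $k\ge4$, $\boldsymbol{\mathcal{S}}_{\mu_0,\mu_1,\mu_2}$ (intrinsic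 mode spline function souls) is the set of $(\boldsymbol{a},\boldsymbol{\phi})\in\mathbb{R}^n\times\mathbb{R}^n$ with $0\preceq\mathbb{B}_k(\boldsymbol{a})$, $\mu_0\preceq\mathbb{B}_k(\boldsymbol{\phi})'$, $|\mathbb{B}_k(\boldsymbol{a})'|\preceq\mu_1|\mathbb{B}_k(\boldsymbol{\phi})'|$, $|\mathbb{B}_k(\boldsymbol{\phi})''|\preceq\mu_2|\mathbb{B}_k(\boldsymbol{\phi})'|$. A function $F$ on a convex set $C\subseteq\mathbb{R}^m$ is convex iff $F(\lambda x+(1-\lambda)y)\le\lambda F(x)+(1-\lambda)F(y)$ for all $x,y\in C$, $\lambda\in[0,1]$. *)

theory Defs
  imports "HOL-Analysis.Analysis"
begin

definition ext_knot :: "nat \<Rightarrow> nat \<Rightarrow> (nat \<Rightarrow> real) \<Rightarrow> nat \<Rightarrow> real" where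
  "ext_knot k l \<tau> i =
     (if i \<le> k - 1 then \<tau> 0
      else if i \<le> k + l - 3 then \<tau> (i - k + 1)
      else \<tau> (l - 1))"

text \<open>B-splines by the de Boor--Cox recursion on a knot vector d; b is the right end
  of the parameter interval (order-1 splines are indicators of [d i, d (i+1)), except that
  the last nondegenerate interval ending at b is closed, the standard convention).
  Terms with vanishing denominator are 0 (note x / 0 = 0 in Isabelle).\<close>
fun bspline :: "(nat \<Rightarrow> real) \<Rightarrow> real \<Rightarrow> nat \<Rightarrow> nat \<Rightarrow> real \<Rightarrow> real" where
  "bspline d b i 0 t = 0"
| "bspline d b i (Suc 0) t =
     (if d i \<le> t \<and> (t < d (Suc i) \<or> (t = b \<and> d (Suc i) = b \<and> d i < d (Suc i))) then 1 else 0)"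
| "bspline d b i (Suc (Suc m)) t =
     (if d (i + Suc m) = d i then 0
      else (t - d i) / (d (i + Suc m) - d i) * bspline d b i (Suc m) t)
   + (if d (i + Suc (Suc m)) = d (Suc i) then 0
      else (d (i + Suc (Suc m)) - t) / (d (i + Suc (Suc m)) - d (Suc i)) * bspline d b (Suc i) (Suc m) t)"

definition spline :: "nat \<Rightarrow> nat \<Rightarrow> (nat \<Rightarrow> real) \<Rightarrow> (nat \<Rightarrow> real) \<Rightarrow> real \<Rightarrow> real" where
  "spline k l \<tau> x t = (\<Sum>i < k + l - 2. x i * bspline (ext_knot k l \<tau>) (\<tau> (l - 1)) i k t)"

text \<open>Vectors in R^n are represented as functions nat \<Rightarrow> real vanishing from index n on.\<close>
definition Rn :: "nat \<Rightarrow> (nat \<Rightarrow> real) set" where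
  "Rn n = {x. \<forall>i \<ge> n. x i = 0}"

text \<open>Intrinsic mode spline function souls S_{mu0,mu1,mu2}; derivatives are taken on the
  closed interval [tau_0, tau_(l-1)] (one-sided at the end points).\<close>
definition souls :: "nat \<Rightarrow> nat \<Rightarrow> (nat \<Rightarrow> real) \<Rightarrow> real \<Rightarrow> real \<Rightarrow> real
    \<Rightarrow> ((nat \<Rightarrow> real) \<times> (nat \<Rightarrow> real)) set" where
  "souls k l \<tau> \<mu>0 \<mu>1 \<mu>2 =
     {(a, \<phi>). a \<in> Rn (k + l - 2) \<and> \<phi> \<in> Rn (k + l - 2) \<and>
       (let I = {\<tau> 0 .. \<tau> (l - 1)}; A = spline k l \<tau> a; P = spline k l \<tau> \<phi> in
        \<exists>dA dP ddP. \<forall>t\<in>I.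
          (A has_real_derivative dA t) (at t within I) \<and>
          (P has_real_derivative dP t) (at t within I) \<and>
          (dP has_real_derivative ddP t) (at t within I) \<and>
          0 \<le> A t \<and> \<mu>0 \<le> dP t \<and>
          \<bar>dA t\<bar> \<le> \<mu>1 * \<bar>dP t\<bar> \<and> \<bar>ddP t\<bar> \<le> \<mu>2 * \<bar>dP t\<bar>)}"

definition emd_cost :: "nat \<Rightarrow> nat \<Rightarrow> (nat \<Rightarrow> real) \<Rightarrow> (nat \<Rightarrow> real)
    \<Rightarrow> (nat \<Rightarrow> real) \<times> (nat \<Rightarrow> real) \<Rightarrow> real" where
  "emd_cost k l \<tau> s ap =
     integral {\<tau> 0 .. \<tau> (l - 1)}
       (\<lambda>t. (spline k l \<tau> s t - spline k l \<tau> (fst ap) t * cos (spline k l \<tau> (snd ap) t))\<^sup>2)"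

definition pcomb :: "real \<Rightarrow> (nat \<Rightarrow> real) \<times> (nat \<Rightarrow> real) \<Rightarrow> (nat \<Rightarrow> real) \<times> (nat \<Rightarrow> real)
    \<Rightarrow> (nat \<Rightarrow> real) \<times> (nat \<Rightarrow> real)" where
  "pcomb c x y = ((\<lambda>i. c * fst x i + (1 - c) * fst y i), (\<lambda>i. c * snd x i + (1 - c) * snd y i))"

definition convex_fun :: "((nat \<Rightarrow> real) \<times> (nat \<Rightarrow> real)) set
    \<Rightarrow> ((nat \<Rightarrow> real) \<times> (nat \<Rightarrow> real) \<Rightarrow> real) \<Rightarrow> bool" where
  "convex_fun C F \<longleftrightarrow> (\<forall>x\<in>C. \<forall>y\<in>C. \<forall>c::real. 0 \<le> c \<and> c \<le> 1 \<longrightarrow>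
      F (pcomb c x y) \<le> c * F x + (1 - c) * F y)"

end

theory Submission
  imports Defs
begin

text \<open>B-splines reproduce affine functions, so the constant amplitude 1 together with any
  linear phase \<beta> + \<alpha> t is a soul as soon as \<alpha> \<ge> \<mu>0. Along the line \<beta> \<mapsto> (1, \<beta> + \<alpha> t) the
  cost is a 2\<pi>-periodic function of \<beta>; if it were convex it would be constant. But the
  alternating sum of the cost at \<beta>, \<beta> + \<pi>, \<beta> + \<pi>/2, \<beta> + 3\<pi>/2 is the integral of
  2 cos (2 (\<beta> + \<alpha> t)), independently of the signal, and for a suitable frequency \<alpha> this
  integral is -2/\<alpha> \<noteq> 0.\<close>

definition lweight :: "(nat \<Rightarrow> real) \<Rightarrow> nat \<Rightarrow> nat \<Rightarrow> real \<Rightarrow> real" where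
  "lweight d m i t = (if d (i + Suc m) = d i then 0 else (t - d i) / (d (i + Suc m) - d i))"

definition rweight :: "(nat \<Rightarrow> real) \<Rightarrow> nat \<Rightarrow> nat \<Rightarrow> real \<Rightarrow> real" where
  "rweight d m i t = (if d (i + Suc m) = d i then 0 else (d (i + Suc m) - t) / (d (i + Suc m) - d i))"

lemma bspline_Suc_Suc:
  "bspline d b i (Suc (Suc m)) t =
     lweight d m i t * bspline d b i (Suc m) t + rweight d m (Suc i) t * bspline d b (Suc i) (Suc m) t"
  by (simp add: lweight_def rweight_def)

lemma bspline_nonzero_imp_support:
  assumes "mono d" "bspline d b i m t \<noteq> 0"
  shows "d i \<le> t \<and> t \<le> d (i + m) \<and> d i < d (i + m)"
  using assms(2)
proof (induction m arbitrary: i)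
  case 0 then show ?case by simp
next
  case (Suc m)
  show ?case
  proof (cases m)
    case 0 then show ?thesis using Suc.prems by (auto split: if_splits)
  next
    case (Suc m')
    have "d (i + Suc m') \<le> d (i + Suc (Suc m'))" "d i \<le> d (Suc i)"
      by (auto intro!: monoD[OF assms(1)])
    moreover have "bspline d b i m t \<noteq> 0 \<or> bspline d b (Suc i) m t \<noteq> 0"
      using Suc.prems unfolding Suc bspline_Suc_Suc by auto
    ultimately show ?thesis using Suc.IH[of i] Suc.IH[of "Suc i"] unfolding Suc by auto
  qed
qed

lemma weights_on_support:
  assumes "mono d" "bspline d b i (Suc m) t \<noteq> 0"
  shows "0 \<le> lweight d m i t" "lweight d m i t \<le> 1"
    and "0 \<le> rweight d m i t" "rweight d m i t \<le> 1"
    and "lweight d m i t + rweight d m i t = 1"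
    and "d (i + Suc m) * lweight d m i t + d i * rweight d m i t = t"
proof -
  have supp: "d i \<le> t" "t \<le> d (i + Suc m)" "d i < d (i + Suc m)"
    using bspline_nonzero_imp_support[OF assms] by auto
  then show "0 \<le> lweight d m i t" "lweight d m i t \<le> 1" "0 \<le> rweight d m i t" "rweight d m i t \<le> 1"
    by (auto simp: lweight_def rweight_def divide_simps)
  define D where "D = d (i + Suc m) - d i"
  have D: "D \<noteq> 0" using supp by (simp add: D_def)
  have "lweight d m i t = (t - d i) / D" "rweight d m i t = (d (i + Suc m) - t) / D"
    using supp by (simp_all add: lweight_def rweight_def D_def)
  moreover have "(t - d i) + (d (i + Suc m) - t) = D"
    "d (i + Suc m) * (t - d i) + d i * (d (i + Suc m) - t) = t * D"
    by (simp_all add: D_def algebra_simps)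
  ultimately show "lweight d m i t + rweight d m i t = 1"
    "d (i + Suc m) * lweight d m i t + d i * rweight d m i t = t"
    using D by (simp_all only: times_divide_eq_right add_divide_distrib[symmetric]) simp_all
qed

lemma abs_bspline_le:
  assumes "mono d"
  shows "\<bar>bspline d b i m t\<bar> \<le> 2 ^ m"
proof (induction m arbitrary: i)
  case 0 then show ?case by simp
next
  case (Suc m)
  show ?case
  proof (cases m)
    case 0 then show ?thesis by auto
  next
    case (Suc m')
    have "\<bar>w * bspline d b j m t\<bar> \<le> 2 ^ m"
      if "bspline d b j m t \<noteq> 0 \<Longrightarrow> 0 \<le> w \<and> w \<le> 1" for w j
    proof (cases "bspline d b j m t = 0")
      case False
      then have "\<bar>w * bspline d b j m t\<bar> \<le> \<bar>bspline d b j m t\<bar>"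
        using that by (simp add: abs_mult mult_left_le_one_le)
      then show ?thesis using Suc.IH[of j] by linarith
    qed simp
    then have "\<bar>lweight d m' i t * bspline d b i m t\<bar> \<le> 2 ^ m"
      "\<bar>rweight d m' (Suc i) t * bspline d b (Suc i) m t\<bar> \<le> 2 ^ m"
      using weights_on_support[OF assms] unfolding Suc by blast+
    then show ?thesis unfolding Suc bspline_Suc_Suc by simp
  qed
qed

lemma bspline_borel_measurable: "bspline d b i m \<in> borel_measurable borel"
proof (induction m arbitrary: i)
  case 0
  have "bspline d b i 0 = (\<lambda>_. 0)" by (simp add: fun_eq_iff)
  then show ?case by simp
next
  case (Suc m)
  show ?case
  proof (cases m)
    case (Suc m')
    have "bspline d b i (Suc m) =
        (\<lambda>t. lweight d m' i t * bspline d b i m t + rweight d m' (Suc i) t * bspline d b (Suc i) m t)"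
      unfolding Suc bspline_Suc_Suc ..
    then show ?thesis using Suc.IH unfolding lweight_def rweight_def by simp
  qed simp
qed

lemma sum_bspline_Suc_Suc:
  "(\<Sum>i<N. c i * bspline d b i (Suc (Suc m)) t) =
   (\<Sum>i<Suc N. ((if i < N then c i * lweight d m i t else 0)
                 + (if 0 < i then c (i - 1) * rweight d m i t else 0)) * bspline d b i (Suc m) t)"
proof -
  have "(\<Sum>i<Suc N. ((if i < N then c i * lweight d m i t else 0)
                 + (if 0 < i then c (i - 1) * rweight d m i t else 0)) * bspline d b i (Suc m) t)
      = (\<Sum>i<Suc N. (if i < N then c i * lweight d m i t else 0) * bspline d b i (Suc m) t)
        + (\<Sum>i<Suc N. (if 0 < i then c (i - 1) * rweight d m i t else 0) * bspline d b i (Suc m) t)"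
    by (simp add: sum.distrib distrib_right)
  also have "\<dots> = (\<Sum>i<N. c i * lweight d m i t * bspline d b i (Suc m) t)
        + (\<Sum>i<N. c i * rweight d m (Suc i) t * bspline d b (Suc i) (Suc m) t)"
    by (subst (2) sum.lessThan_Suc_shift) simp
  also have "\<dots> = (\<Sum>i<N. c i * bspline d b i (Suc (Suc m)) t)"
    unfolding sum.distrib[symmetric] bspline_Suc_Suc by (simp only: algebra_simps)
  finally show ?thesis ..
qed

lemma sum_indicator_knot_intervals_right_open:
  "mono (d :: nat \<Rightarrow> real) \<Longrightarrow>
    (\<Sum>i<M. if d i \<le> t \<and> t < d (Suc i) then 1 else 0 :: real) = (if d 0 \<le> t \<and> t < d M then 1 else 0)"
proof (induction M)
  case (Suc M)
  have "d 0 \<le> d M" "d M \<le> d (Suc M)" by (auto intro!: monoD[OF Suc.prems])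
  then show ?case using Suc by auto
qed auto

lemma sum_indicator_knot_intervals_left_open:
  "mono (d :: nat \<Rightarrow> real) \<Longrightarrow>
    (\<Sum>i<M. if d i < t \<and> t \<le> d (Suc i) then 1 else 0 :: real) = (if d 0 < t \<and> t \<le> d M then 1 else 0)"
proof (induction M)
  case (Suc M)
  have "d 0 \<le> d M" "d M \<le> d (Suc M)" by (auto intro!: monoD[OF Suc.prems])
  then show ?case using Suc by auto
qed auto

lemma sum_bspline_order_one:
  assumes "mono d" "d 0 < b" "d N = b" "d 0 \<le> t" "t \<le> b"
  shows "(\<Sum>i<N. bspline d b i (Suc 0) t) = 1"
proof (cases "t < b")
  case True
  then have "(\<Sum>i<N. bspline d b i (Suc 0) t) = (\<Sum>i<N. if d i \<le> t \<and> t < d (Suc i) then 1 else 0)"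
    by (intro sum.cong) auto
  then show ?thesis using sum_indicator_knot_intervals_right_open[OF assms(1)] True assms by simp
next
  case False
  \<comment> \<open>At t = b the order-one splines are the indicators of the left-open knot intervals.\<close>
  have "(\<Sum>i<N. bspline d b i (Suc 0) t) = (\<Sum>i<N. if d i < t \<and> t \<le> d (Suc i) then 1 else 0)"
  proof (intro sum.cong refl)
    fix i assume "i \<in> {..<N}"
    then have "d (Suc i) \<le> b" using monoD[OF assms(1), of "Suc i" N] assms(3) by simp
    then show "bspline d b i (Suc 0) t = (if d i < t \<and> t \<le> d (Suc i) then 1 else 0)"
      using False assms(5) by auto
  qed
  then show ?thesis using sum_indicator_knot_intervals_left_open[OF assms(1)] False assms by simp
qed

text \<open>m times the Greville abscissa of the i-th B-spline of order m + 1.\<close>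
definition knot_sum :: "(nat \<Rightarrow> real) \<Rightarrow> nat \<Rightarrow> nat \<Rightarrow> real" where
  "knot_sum d m i = (\<Sum>j = Suc i..i + m. d j)"

lemma knot_sum_0 [simp]: "knot_sum d 0 i = 0"
  by (simp add: knot_sum_def)

lemma knot_sum_Suc: "knot_sum d (Suc m) i = knot_sum d m i + d (i + Suc m)"
  by (simp add: knot_sum_def)

lemma knot_sum_Suc_pred: "0 < i \<Longrightarrow> knot_sum d (Suc m) (i - 1) = d i + knot_sum d m i"
  by (cases i) (simp_all add: knot_sum_def sum.atLeast_Suc_atMost)

lemma affine_coeffs_weighted_on_support:
  fixes d :: "nat \<Rightarrow> real" and m :: nat and \<beta> \<gamma> :: real
  defines "c i \<equiv> \<beta> + \<gamma> * knot_sum d (Suc m) i"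
  assumes "mono d" "bspline d b i (Suc m) t \<noteq> 0" "i \<le> N" "d (Suc m) \<le> t" "t \<le> d N"
  shows "(if i < N then c i * lweight d m i t else 0) + (if 0 < i then c (i - 1) * rweight d m i t else 0)
      = (\<beta> + \<gamma> * knot_sum d m i) + \<gamma> * t"
proof -
  define X where "X = \<beta> + \<gamma> * knot_sum d m i"
  note w = weights_on_support[OF assms(2,3)]
  have supp: "d i \<le> t" "t \<le> d (i + Suc m)" "d i < d (i + Suc m)"
    using bspline_nonzero_imp_support[OF assms(2,3)] by auto
  have left: "c i * lweight d m i t = X * lweight d m i t + \<gamma> * (d (i + Suc m) * lweight d m i t)"
    by (simp add: c_def X_def knot_sum_Suc algebra_simps)
  have right: "c (i - 1) * rweight d m i t = X * rweight d m i t + \<gamma> * (d i * rweight d m i t)"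
    if "0 < i" unfolding c_def knot_sum_Suc_pred[OF that] X_def by (simp add: algebra_simps)
  consider "0 < i" "i < N" | "i = 0" "0 < N" | "i = N" "0 < N" | "i = 0" "N = 0"
    using assms(4) by fastforce
  then show ?thesis
  proof cases
    case 1
    have "X * lweight d m i t + X * rweight d m i t = X"
      "\<gamma> * (d (i + Suc m) * lweight d m i t) + \<gamma> * (d i * rweight d m i t) = \<gamma> * t"
      using w(5,6) by (simp_all flip: distrib_left)
    then show ?thesis using 1 left right by (simp add: X_def)
  next
    case 2
    then have "rweight d m i t = 0" using supp assms(5) by (simp add: rweight_def)
    then show ?thesis using 2 left w(5) supp assms(5) by (simp add: X_def)
  next
    case 3
    then have "lweight d m i t = 0" using supp assms(6) by (simp add: lweight_def)
    then show ?thesis using 3 right w(5,6) by (simp add: X_def)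
  next
    case 4
    then show ?thesis using supp assms(5,6) by simp
  qed
qed

text \<open>Marsden's identity in degree at most one.\<close>
lemma sum_bspline_affine_coeffs:
  assumes "mono d" "d 0 < b" "d (N + m) = b" "d m \<le> t" "t \<le> d N"
  shows "(\<Sum>i<N. (\<beta> + \<gamma> * knot_sum d m i) * bspline d b i (Suc m) t) = \<beta> + \<gamma> * real m * t"
  using assms(3-5)
proof (induction m arbitrary: N \<beta> \<gamma>)
  case 0
  then show ?case using sum_bspline_order_one[OF assms(1,2), of N t]
    by (simp add: sum_distrib_left[symmetric])
next
  case (Suc m)
  have shifted: "d (Suc N + m) = b" "d m \<le> t" "t \<le> d (Suc N)"
    using Suc.prems monoD[OF assms(1), of m "Suc m"] monoD[OF assms(1), of N "Suc N"] by simp_all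
  note IH = Suc.IH[OF shifted]
  have partition: "(\<Sum>i<Suc N. bspline d b i (Suc m) t) = 1"
    using IH[of 1 0] by simp
  have "(\<Sum>i<N. (\<beta> + \<gamma> * knot_sum d (Suc m) i) * bspline d b i (Suc (Suc m)) t)
      = (\<Sum>i<Suc N. ((\<beta> + \<gamma> * knot_sum d m i) + \<gamma> * t) * bspline d b i (Suc m) t)"
    unfolding sum_bspline_Suc_Suc using Suc.prems(2,3)
    by (intro sum.cong refl) (metis affine_coeffs_weighted_on_support[OF assms(1)] lessThan_Suc_atMost
        atMost_iff mult_zero_right)
  also have "\<dots> = (\<Sum>i<Suc N. (\<beta> + \<gamma> * knot_sum d m i) * bspline d b i (Suc m) t)
      + \<gamma> * t * (\<Sum>i<Suc N. bspline d b i (Suc m) t)"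
    by (simp only: distrib_right sum.distrib sum_distrib_left mult.assoc)
  finally show ?case unfolding IH partition by (simp add: algebra_simps)
qed

lemma mono_ext_knot:
  assumes "\<And>i j. i < j \<Longrightarrow> j < l \<Longrightarrow> \<tau> i < \<tau> j"
  shows "mono (ext_knot k l \<tau>)"
proof (rule incseq_SucI)
  have "\<tau> i \<le> \<tau> j" if "i \<le> j" "j < l" for i j
    using assms[of i j] that by (cases "i = j") auto
  then show "ext_knot k l \<tau> i \<le> ext_knot k l \<tau> (Suc i)" for i
    unfolding ext_knot_def by (cases "l = 0") auto
qed

lemma spline_borel_measurable: "spline k l \<tau> x \<in> borel_measurable borel"
  unfolding spline_def by (intro borel_measurable_sum borel_measurable_times) (auto intro: bspline_borel_measurable)

lemma abs_spline_le:
  assumes "\<And>i j. i < j \<Longrightarrow> j < l \<Longrightarrow> \<tau> i < \<tau> j"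
  shows "\<bar>spline k l \<tau> x t\<bar> \<le> (\<Sum>i < k + l - 2. \<bar>x i\<bar>) * 2 ^ k"
proof -
  have "\<bar>spline k l \<tau> x t\<bar> \<le> (\<Sum>i < k + l - 2. \<bar>x i\<bar> * \<bar>bspline (ext_knot k l \<tau>) (\<tau> (l - 1)) i k t\<bar>)"
    unfolding spline_def abs_mult[symmetric] by (rule sum_abs)
  also have "\<dots> \<le> (\<Sum>i < k + l - 2. \<bar>x i\<bar> * 2 ^ k)"
    by (intro sum_mono mult_left_mono abs_bspline_le mono_ext_knot assms) auto
  finally show ?thesis by (simp add: sum_distrib_right)
qed

definition affine_coeffs :: "nat \<Rightarrow> nat \<Rightarrow> (nat \<Rightarrow> real) \<Rightarrow> real \<Rightarrow> real \<Rightarrow> nat \<Rightarrow> real" where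
  "affine_coeffs k l \<tau> \<beta> \<gamma> i =
     (if i < k + l - 2 then \<beta> + \<gamma> * knot_sum (ext_knot k l \<tau>) (k - 1) i else 0)"

lemma affine_coeffs_in_Rn: "affine_coeffs k l \<tau> \<beta> \<gamma> \<in> Rn (k + l - 2)"
  by (simp add: Rn_def affine_coeffs_def)

lemma pcomb_affine_coeffs:
  "pcomb c (a, affine_coeffs k l \<tau> x \<gamma>) (a, affine_coeffs k l \<tau> y \<gamma>)
     = (a, affine_coeffs k l \<tau> (c * x + (1 - c) * y) \<gamma>)"
  by (auto simp: pcomb_def affine_coeffs_def fun_eq_iff algebra_simps)

lemma spline_affine_coeffs:
  assumes "1 \<le> k" "2 \<le> l" "\<And>i j. i < j \<Longrightarrow> j < l \<Longrightarrow> \<tau> i < \<tau> j" "t \<in> {\<tau> 0..\<tau> (l - 1)}"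
  shows "spline k l \<tau> (affine_coeffs k l \<tau> \<beta> \<gamma>) t = \<beta> + \<gamma> * real (k - 1) * t"
proof -
  define d where "d = ext_knot k l \<tau>"
  define n where "n = k + l - 2"
  have k: "k = Suc (k - 1)" using assms(1) by simp
  have "spline k l \<tau> (affine_coeffs k l \<tau> \<beta> \<gamma>) t
      = (\<Sum>i<n. (\<beta> + \<gamma> * knot_sum d (k - 1) i) * bspline d (\<tau> (l - 1)) i (Suc (k - 1)) t)"
    unfolding spline_def affine_coeffs_def d_def n_def by (subst (2) k) simp
  also have "\<dots> = \<beta> + \<gamma> * real (k - 1) * t"
  proof (rule sum_bspline_affine_coeffs)
    show "mono d" unfolding d_def by (rule mono_ext_knot[OF assms(3)])
    show "d 0 < \<tau> (l - 1)" "d (n + (k - 1)) = \<tau> (l - 1)"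
      using assms(1,2) assms(3)[of 0 "l - 1"] by (auto simp: d_def n_def ext_knot_def)
    show "d (k - 1) \<le> t" "t \<le> d n"
      using assms(1,2,4) by (auto simp: d_def n_def ext_knot_def)
  qed
  finally show ?thesis .
qed

lemma affine_pair_in_souls:
  assumes "1 \<le> k" "2 \<le> l" "\<And>i j. i < j \<Longrightarrow> j < l \<Longrightarrow> \<tau> i < \<tau> j"
    and "\<mu>0 \<le> \<gamma> * real (k - 1)" "0 \<le> \<mu>1" "0 \<le> \<mu>2"
  shows "(affine_coeffs k l \<tau> 1 0, affine_coeffs k l \<tau> \<beta> \<gamma>) \<in> souls k l \<tau> \<mu>0 \<mu>1 \<mu>2"
proof -
  define I where "I = {\<tau> 0..\<tau> (l - 1)}"
  define \<alpha> where "\<alpha> = \<gamma> * real (k - 1)"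
  have A: "spline k l \<tau> (affine_coeffs k l \<tau> 1 0) t = 1"
    and P: "spline k l \<tau> (affine_coeffs k l \<tau> \<beta> \<gamma>) t = \<beta> + \<alpha> * t" if "t \<in> I" for t
    using spline_affine_coeffs[OF assms(1-3)] that by (simp_all add: I_def \<alpha>_def)
  have "(spline k l \<tau> (affine_coeffs k l \<tau> 1 0) has_real_derivative 0) (at t within I) \<and>
        (spline k l \<tau> (affine_coeffs k l \<tau> \<beta> \<gamma>) has_real_derivative \<alpha>) (at t within I)"
    if t: "t \<in> I" for t
  proof
    show "(spline k l \<tau> (affine_coeffs k l \<tau> 1 0) has_real_derivative 0) (at t within I)"
      by (rule has_field_derivative_transform_within[where d=1 and f="\<lambda>_. 1"]) (use t A in auto)
    show "(spline k l \<tau> (affine_coeffs k l \<tau> \<beta> \<gamma>) has_real_derivative \<alpha>) (at t within I)"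
      by (rule has_field_derivative_transform_within[where d=1 and f="\<lambda>t. \<beta> + \<alpha> * t"])
        (use t P in \<open>auto intro!: derivative_eq_intros\<close>)
  qed
  then show ?thesis
    unfolding souls_def Let_def I_def[symmetric] using A assms(4-6)
    by (intro CollectI case_prodI conjI affine_coeffs_in_Rn)
      (rule exI[of _ "\<lambda>_. 0"], rule exI[of _ "\<lambda>_. \<alpha>"], rule exI[of _ "\<lambda>_. 0"], simp add: \<alpha>_def)
qed

definition phase_misfit :: "(real \<Rightarrow> real) \<Rightarrow> real \<Rightarrow> real \<Rightarrow> real \<Rightarrow> real \<Rightarrow> real" where
  "phase_misfit S a b \<alpha> \<beta> = integral {a..b} (\<lambda>t. (S t - cos (\<beta> + \<alpha> * t))\<^sup>2)"

lemma emd_cost_affine_coeffs: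
  assumes "1 \<le> k" "2 \<le> l" "\<And>i j. i < j \<Longrightarrow> j < l \<Longrightarrow> \<tau> i < \<tau> j"
  shows "emd_cost k l \<tau> s (affine_coeffs k l \<tau> 1 0, affine_coeffs k l \<tau> \<beta> \<gamma>)
       = phase_misfit (spline k l \<tau> s) (\<tau> 0) (\<tau> (l - 1)) (\<gamma> * real (k - 1)) \<beta>"
  unfolding emd_cost_def phase_misfit_def
  by (intro integral_cong) (simp add: spline_affine_coeffs[OF assms] algebra_simps)

lemma phase_misfit_periodic: "phase_misfit S a b \<alpha> (\<beta> + 2 * pi) = phase_misfit S a b \<alpha> \<beta>"
proof -
  have "cos (\<beta> + 2 * pi + \<alpha> * t) = cos (\<beta> + \<alpha> * t)" for t
    using cos_periodic[of "\<beta> + \<alpha> * t"] by (simp add: algebra_simps)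
  then show ?thesis by (simp add: phase_misfit_def)
qed

lemma integrable_on_bounded_borel:
  fixes f :: "real \<Rightarrow> real"
  assumes "f \<in> borel_measurable borel" "\<And>t. \<bar>f t\<bar> \<le> B"
  shows "f integrable_on {a..b}"
proof (rule measurable_bounded_by_integrable_imp_integrable_real)
  show "f \<in> borel_measurable (lebesgue_on {a..b})"
    using assms(1) by (metis measurable_lborel2 measurable_restrict_space1 measurable_completion)
qed (use assms(2) in auto)

lemma cos_phase_shifts_identity:
  "(x - cos \<theta>)\<^sup>2 + (x - cos (\<theta> + pi))\<^sup>2 - (x - cos (\<theta> + pi / 2))\<^sup>2 - (x - cos (\<theta> + 3 / 2 * pi))\<^sup>2
     = 2 * cos (2 * \<theta>)"
proof -
  have shifts: "cos (\<theta> + pi) = - cos \<theta>" "cos (\<theta> + pi / 2) = - sin \<theta>" "cos (\<theta> + 3 / 2 * pi) = sin \<theta>"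
    by (simp_all only: cos_add cos_pi sin_pi cos_pi_half sin_pi_half cos_3over2_pi sin_3over2_pi)
  show ?thesis unfolding shifts cos_double by (simp add: power2_eq_square algebra_simps)
qed

lemma phase_misfit_four_shifts:
  fixes S :: "real \<Rightarrow> real"
  assumes "S \<in> borel_measurable borel" "\<And>t. \<bar>S t\<bar> \<le> B" "\<alpha> \<noteq> 0" "a \<le> b"
  shows "phase_misfit S a b \<alpha> \<beta> + phase_misfit S a b \<alpha> (\<beta> + pi)
       - phase_misfit S a b \<alpha> (\<beta> + pi / 2) - phase_misfit S a b \<alpha> (\<beta> + 3 / 2 * pi)
       = (sin (2 * (\<beta> + \<alpha> * b)) - sin (2 * (\<beta> + \<alpha> * a))) / \<alpha>"
proof -
  define f where "f \<beta> t = (S t - cos (\<beta> + \<alpha> * t))\<^sup>2" for \<beta> t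
  have int: "f \<beta> integrable_on {a..b}" for \<beta>
  proof (rule integrable_on_bounded_borel)
    show "f \<beta> \<in> borel_measurable borel" unfolding f_def using assms(1) by measurable
    have bound: "\<bar>S t - cos (\<beta> + \<alpha> * t)\<bar> \<le> B + 1" for t
      using assms(2)[of t] abs_cos_le_one[of "\<beta> + \<alpha> * t"] by linarith
    then show "\<bar>f \<beta> t\<bar> \<le> (B + 1)\<^sup>2" for t
      unfolding f_def using power_mono[OF bound[of t] abs_ge_zero, of 2] by simp
  qed
  have pointwise: "f \<beta> t + f (\<beta> + pi) t - f (\<beta> + pi / 2) t - f (\<beta> + 3 / 2 * pi) t
      = 2 * cos (2 * (\<beta> + \<alpha> * t))" for t
    using cos_phase_shifts_identity[of "S t" "\<beta> + \<alpha> * t"] by (simp add: f_def algebra_simps)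
  have "phase_misfit S a b \<alpha> \<beta> + phase_misfit S a b \<alpha> (\<beta> + pi)
       - phase_misfit S a b \<alpha> (\<beta> + pi / 2) - phase_misfit S a b \<alpha> (\<beta> + 3 / 2 * pi)
      = integral {a..b} (\<lambda>t. f \<beta> t + f (\<beta> + pi) t - f (\<beta> + pi / 2) t - f (\<beta> + 3 / 2 * pi) t)"
    using int unfolding phase_misfit_def f_def[symmetric]
    by (simp add: integral_add integral_diff integrable_add integrable_diff)
  also have "\<dots> = integral {a..b} (\<lambda>t. 2 * cos (2 * (\<beta> + \<alpha> * t)))"
    by (simp only: pointwise)
  also have "\<dots> = (sin (2 * (\<beta> + \<alpha> * b)) - sin (2 * (\<beta> + \<alpha> * a))) / \<alpha>"
    unfolding diff_divide_distrib
  proof (rule integral_unique, rule fundamental_theorem_of_calculus[OF assms(4)])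
    show "((\<lambda>t. sin (2 * (\<beta> + \<alpha> * t)) / \<alpha>) has_vector_derivative 2 * cos (2 * (\<beta> + \<alpha> * x)))
        (at x within {a..b})" for x
      unfolding has_real_derivative_iff_has_vector_derivative[symmetric]
      using assms(3) by (auto intro!: derivative_eq_intros simp: field_simps)
  qed
  finally show ?thesis .
qed

lemma convex_on_line_if_convex_fun:
  assumes "convex_fun C F" "\<And>x. L x \<in> C"
    and "\<And>c x y. pcomb c (L x) (L y) = L (c * x + (1 - c) * y)"
  shows "convex_on UNIV (\<lambda>x. F (L x))"
  unfolding convex_on_def
proof (intro conjI convex_UNIV ballI allI impI)
  fix x y u v :: real assume "0 \<le> u" "0 \<le> v" "u + v = 1"
  then have "F (pcomb u (L x) (L y)) \<le> u * F (L x) + (1 - u) * F (L y)"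
    using assms(1,2) unfolding convex_fun_def by simp
  then show "F (L (u *\<^sub>R x + v *\<^sub>R y)) \<le> u * F (L x) + v * F (L y)"
    using \<open>u + v = 1\<close> by (simp add: assms(3) eq_diff_eq[symmetric] add.commute)
qed

lemma convex_periodic_imp_constant:
  fixes g :: "real \<Rightarrow> real"
  assumes "convex_on UNIV g" "0 < p" "\<And>x. g (x + p) = g x"
  shows "g x = g y"
proof -
  have shift: "g (z + real m * p) = g z" for z m
    by (induction m) (simp_all add: algebra_simps assms(3)[of "z + real m * p" for m, simplified algebra_simps])
  have le: "g y \<le> g x" for x y
  proof -
    obtain m :: nat where "\<bar>y - x\<bar> / p < real m" using reals_Archimedean2 by blast
    then have m: "\<bar>y - x\<bar> < real m * p" using assms(2) by (simp add: field_simps)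
    define lo where "lo = x - real m * p"
    define hi where "hi = x + real m * p"
    have ends: "g lo = g x" "g hi = g x" using shift[of lo m] shift[of x m] by (simp_all add: lo_def hi_def)
    define u where "u = (hi - y) / (hi - lo)"
    have "lo < y" "y < hi" using m by (auto simp: lo_def hi_def)
    then have "0 \<le> u" "u \<le> 1" "u * (hi - lo) = hi - y" by (auto simp: u_def field_simps)
    then have u: "0 \<le> u" "u \<le> 1" "y = (1 - u) *\<^sub>R hi + u *\<^sub>R lo"
      by (auto simp: algebra_simps)
    have "g y \<le> (1 - u) * g hi + u * g lo" using convex_onD[OF assms(1) u(1,2)] u(3) by simp
    then show ?thesis by (simp add: ends algebra_simps)
  qed
  show ?thesis using le[of x y] le[of y x] by simp
qed

lemma exists_frequency_sin_eq_minus_one: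
  assumes "0 < L"
  obtains \<alpha> :: real where "\<mu> \<le> \<alpha>" "0 < \<alpha>" "sin (pi / 2 + 2 * \<alpha> * L) = -1"
proof -
  obtain j :: nat where j: "\<mu> * L / pi < real j" using reals_Archimedean2 by blast
  define \<alpha> where "\<alpha> = (2 * real j + 1) * pi / (2 * L)"
  have "\<mu> * L < real j * pi" using j pi_gt_zero by (simp add: field_simps)
  moreover have "\<mu> * (2 * L) = 2 * (\<mu> * L)" "(2 * real j + 1) * pi = 2 * (real j * pi) + pi"
    by (simp_all add: algebra_simps)
  ultimately have "\<mu> * (2 * L) \<le> (2 * real j + 1) * pi" using pi_gt_zero by linarith
  then have "\<mu> \<le> \<alpha>" using assms by (simp add: \<alpha>_def field_simps)
  moreover have "0 < \<alpha>" using assms by (simp add: \<alpha>_def)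
  moreover have "pi / 2 + 2 * \<alpha> * L = 3 / 2 * pi + 2 * real j * pi"
    using assms by (simp add: \<alpha>_def field_simps)
  then have "sin (pi / 2 + 2 * \<alpha> * L) = -1"
    by (simp only: sin_add sin_3over2_pi cos_3over2_pi sin_2npi cos_2npi)
  ultimately show ?thesis using that by blast
qed

theorem mainTheorem4:
  fixes k l :: nat and \<tau> s :: "nat \<Rightarrow> real" and \<mu>0 \<mu>1 \<mu>2 :: real
  assumes "4 \<le> k" and "k \<le> l - 1"
    and "\<And>i j. i < j \<Longrightarrow> j < l \<Longrightarrow> \<tau> i < \<tau> j"
    and "0 < \<mu>0" and "0 < \<mu>1" and "0 < \<mu>2"
    and "s \<in> Rn (k + l - 2)"
  shows "\<not> convex_fun (souls k l \<tau> \<mu>0 \<mu>1 \<mu>2) (emd_cost k l \<tau> s)"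
proof
  assume convex: "convex_fun (souls k l \<tau> \<mu>0 \<mu>1 \<mu>2) (emd_cost k l \<tau> s)"
  have kl: "1 \<le> k" "2 \<le> l" using assms(1,2) by linarith+
  have "0 < \<tau> (l - 1) - \<tau> 0" using assms(3)[of 0 "l - 1"] kl by simp
  then obtain \<alpha> where \<alpha>: "\<mu>0 \<le> \<alpha>" "0 < \<alpha>" "sin (pi / 2 + 2 * \<alpha> * (\<tau> (l - 1) - \<tau> 0)) = -1"
    by (rule exists_frequency_sin_eq_minus_one)
  define \<gamma> where "\<gamma> = \<alpha> / real (k - 1)"
  have \<gamma>: "\<gamma> * real (k - 1) = \<alpha>" using assms(1) by (simp add: \<gamma>_def)
  define G where "G = phase_misfit (spline k l \<tau> s) (\<tau> 0) (\<tau> (l - 1)) \<alpha>"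
  have "convex_on UNIV (\<lambda>\<beta>. emd_cost k l \<tau> s (affine_coeffs k l \<tau> 1 0, affine_coeffs k l \<tau> \<beta> \<gamma>))"
    using \<alpha>(1) \<gamma> assms(5,6)
    by (intro convex_on_line_if_convex_fun[OF convex] affine_pair_in_souls[OF kl assms(3)] pcomb_affine_coeffs) auto
  then have "convex_on UNIV G"
    by (simp only: emd_cost_affine_coeffs[OF kl assms(3)] \<gamma> G_def)
  then have G_const: "G x = G y" for x y
    using convex_periodic_imp_constant[of G "2 * pi"] phase_misfit_periodic by (simp add: G_def)
  \<comment> \<open>Chosen so that 2 (\<beta> + \<alpha> \<tau>0) = \<pi>/2.\<close>
  define \<beta> where "\<beta> = pi / 4 - \<alpha> * \<tau> 0"
  have "G \<beta> + G (\<beta> + pi) - G (\<beta> + pi / 2) - G (\<beta> + 3 / 2 * pi)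
      = (sin (2 * (\<beta> + \<alpha> * \<tau> (l - 1))) - sin (2 * (\<beta> + \<alpha> * \<tau> 0))) / \<alpha>"
    unfolding G_def using \<alpha>(2) assms(3)[of 0 "l - 1"] kl
    by (intro phase_misfit_four_shifts[OF spline_borel_measurable abs_spline_le[OF assms(3)]]) auto
  also have "\<dots> = - 2 / \<alpha>"
    using \<alpha>(3) by (simp add: \<beta>_def algebra_simps)
  finally show False
    using G_const[of "\<beta> + pi" \<beta>] G_const[of "\<beta> + pi / 2" \<beta>] G_const[of "\<beta> + 3 / 2 * pi" \<beta>] \<alpha>(2)
    by simp
qed

end
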